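(* Let $\mathcal{H}$ be a finite-dimensional complex Hilbert space and let $\mathcal{L}$ be a highly symmetric line system in $\mathcal{H}$. Then there exists a finite subgroup $G\leq \mathrm{Sym}(\mathcal{L})\leq \mathrm{PGL}(\mathcal{H})$ such that: (1) $G$ is irreducible (there is no nontrivial proper projective subspace of $\mathbf{P}(\mathcal{H})$ invariant under all elements of $G$); (2) $G$ acts transitively on the lines of $\mathcal{L}$; (3) for every line $l\in\mathcal{L}$, the stabilizer $G_l=\{g\in G: gl=l\}$ does not fix linewise any subspace properly containing $l$, i.e. there is no subspace $W\supsetneq l$ of $\mathcal{H}$ such that $gm=m$ for every $g\in G_l$ and every line $m\subseteq W$.
   Context: $\mathrm{PGL}(\mathcal{H})=\mathrm{GL}(\mathcal{H})/Z(\mathrm{GL}(\mathcal{H}))$ acts on the projective space $\mathbf{P}(\mathcal{H})$ of lines (1-dimensional subspaces). A line system is a finite sequence $\mathcal{L}=(l_j)_{j\in S}$ of lines in $\mathcal{H}$; it is assumed to span $\mathcal{H}$. Its symmetry group $\mathrm{Sym}(\mathcal{L})$ is the set of all $M\in\mathrm{PGL}(\mathcal{H})$ that permute the lines of $\mathcal{L}$. The stabilizer of a line $l$ in a group $K\le\mathrm{PGL}(\mathcal{H})$ is $K_l=\{h\in K: hl=l\}$. A line system $\mathcal{L}$ of distinct lines is highly symmetric if: (i) $\mathrm{Sym}(\mathcal{L})$ is irreducible (no nontrivial proper invariant projective subspace) and acts transitively on the lines of $\mathcal{L}$; (ii) (automatic for lines) the stabilizer $H_l$ of $l$ in $\mathrm{Sym}(\mathcal{L})$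 acts irreducibly on $l$; (iii) for each $l\in\mathcal{L}$ there is a neighbourhood of $l$ in $\mathbf{P}(\mathcal{H})$ containing no other line $m\neq l$ with $hm=m$ for all $h\in H_l$. *)

theory Defs
  imports "HOL-Analysis.Analysis" "HOL-Algebra.Group"
begin

text \<open>The finite-dimensional complex Hilbert space is modelled as complex^'n
  (with 'n a finite type); complex-linear notions use the library interpretation vec
  of vector_space with scalar multiplication (*s).\<close>

type_synonym 'n vecC = "complex ^ 'n"
type_synonym 'n matC = "complex ^ 'n ^ 'n"

definition is_line :: "'n::finite vecC set \<Rightarrow> bool" where
  "is_line l \<longleftrightarrow> (\<exists>v. v \<noteq> 0 \<and> l = range (\<lambda>c. c *s v))"

lemma is_line_eq:
  assumes "is_line l" "x \<in> l" "x \<noteq> 0"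
  shows "l = range (\<lambda>c. c *s x)"
proof -
  obtain v where v: "v \<noteq> 0" "l = range (\<lambda>c. c *s v)" using assms(1) is_line_def by blast
  then obtain a where a: "x = a *s v" using assms(2) by blast
  with assms(3) have a0: "a \<noteq> 0" by auto
  show ?thesis
  proof
    show "l \<subseteq> range (\<lambda>c. c *s x)"
    proof
      fix y assume "y \<in> l"
      then obtain c where "y = c *s v" using v by blast
      then have "y = (c / a) *s x" using a a0 by (simp add: vector_smult_assoc)
      then show "y \<in> range (\<lambda>c. c *s x)" by blast
    qed
    show "range (\<lambda>c. c *s x) \<subseteq> l"
      using a v by (auto simp: vector_smult_assoc)
  qed
qed

text \<open>Topology of the projective space P(H): quotient topology from H - {0}.\<close>
definition proj_open :: "'n::finite vecC set set \<Rightarrow> bool" where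
  "proj_open U \<longleftrightarrow> (\<forall>l\<in>U. is_line l) \<and> open (\<Union>U - {0})"

lemma istopology_proj_open: "istopology (proj_open :: 'n::finite vecC set set \<Rightarrow> bool)"
  unfolding istopology_def
proof (intro conjI allI impI)
  fix S T :: "'n vecC set set"
  assume S: "proj_open S" and T: "proj_open T"
  have "\<Union>(S \<inter> T) - {0} = (\<Union>S - {0}) \<inter> (\<Union>T - {0})"
  proof
    show "(\<Union>S - {0}) \<inter> (\<Union>T - {0}) \<subseteq> \<Union>(S \<inter> T) - {0}"
    proof
      fix x assume "x \<in> (\<Union>S - {0}) \<inter> (\<Union>T - {0})"
      then obtain l1 l2 where "l1 \<in> S" "l2 \<in> T" "x \<in> l1" "x \<in> l2" "x \<noteq> 0" by blast
      moreover have "l1 = l2"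
        using calculation S T is_line_eq unfolding proj_open_def by metis
      ultimately show "x \<in> \<Union>(S \<inter> T) - {0}" by blast
    qed
  qed blast
  then show "proj_open (S \<inter> T)" using S T unfolding proj_open_def by auto
next
  fix K :: "'n vecC set set set"
  assume K: "\<forall>k\<in>K. proj_open k"
  have "\<Union>(\<Union>K) - {0} = (\<Union>k\<in>K. \<Union>k - {0})" by blast
  moreover have "open (\<Union>k\<in>K. \<Union>k - {0})" using K unfolding proj_open_def by (intro open_UN) blast
  ultimately show "proj_open (\<Union>K)" using K unfolding proj_open_def by (metis Union_iff)
qed

definition proj_top :: "'n::finite vecC set topology" where
  "proj_top = topology proj_open"

definition pgl_class :: "'n::finite matC \<Rightarrow> 'n matC set" where
  "pgl_class M = {mat c ** M | c. c \<noteq> 0}"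

definition PGL :: "'n::finite matC set set" where
  "PGL = {pgl_class M | M. invertible M}"

definition pgl_rep :: "'n::finite matC set \<Rightarrow> 'n matC" where
  "pgl_rep g = (SOME A. A \<in> g)"

definition PGL_group :: "'n::finite matC set monoid" where
  "PGL_group = \<lparr>carrier = PGL,
     mult = (\<lambda>g h. pgl_class (pgl_rep g ** pgl_rep h)),
     one = pgl_class (mat 1)\<rparr>"

definition pgl_apply :: "'n::finite matC set \<Rightarrow> 'n vecC set \<Rightarrow> 'n vecC set" where
  "pgl_apply g S = (\<lambda>x. pgl_rep g *v x) ` S"

definition Sym :: "'n::finite vecC set set \<Rightarrow> 'n matC set set" where
  "Sym L = {g \<in> PGL. pgl_apply g ` L = L}"

definition stab :: "'n::finite matC set set \<Rightarrow> 'n vecC set \<Rightarrow> 'n matC set set" where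
  "stab K l = {h \<in> K. pgl_apply h l = l}"

definition proj_irreducible :: "'n::finite matC set set \<Rightarrow> bool" where
  "proj_irreducible K \<longleftrightarrow>
     \<not> (\<exists>W. vec.subspace W \<and> W \<noteq> {0} \<and> W \<noteq> UNIV \<and> (\<forall>g\<in>K. pgl_apply g W = W))"

definition transitive_on :: "'n::finite matC set set \<Rightarrow> 'n vecC set set \<Rightarrow> bool" where
  "transitive_on K L \<longleftrightarrow> (\<forall>l\<in>L. \<forall>m\<in>L. \<exists>g\<in>K. pgl_apply g l = m)"

definition line_system :: "'n::finite vecC set set \<Rightarrow> bool" where
  "line_system L \<longleftrightarrow> finite L \<and> (\<forall>l\<in>L. is_line l) \<and> vec.span (\<Union>L) = UNIV"

definition highly_symmetric :: "'n::finite vecC set set \<Rightarrow> bool" where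
  "highly_symmetric L \<longleftrightarrow> line_system L
     \<and> proj_irreducible (Sym L) \<and> transitive_on (Sym L) L
     \<and> (\<forall>l\<in>L. \<exists>N. openin proj_top N \<and> l \<in> N \<and>
            (\<forall>m\<in>N. is_line m \<and> m \<noteq> l \<longrightarrow> \<not> (\<forall>h\<in>stab (Sym L) l. pgl_apply h m = m)))"

end

theory Submission
  imports Defs
begin

text \<open>Let \<open>D\<close> be the commutative algebra of matrices having every line of \<open>L\<close> as an eigenline,
  and call two lines of \<open>L\<close> equivalent when every element of \<open>D\<close> has the same eigenvalue on both.
  Fix a spanning vector of each line. A lift \<open>M\<close> of a symmetry sends the vector of \<open>l\<close> to a multiple
  of the vector of \<open>M l\<close>; the product of these multipliers over the class of \<open>l\<close> is multiplicative
  in \<open>M\<close>, and for \<open>M \<in> D\<close> it is an eigenvalue raised to the class size. Taking roots, every lift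
  can be multiplied by an invertible element of \<open>D\<close> so that all class products square to \<open>1\<close>.
  These normalized lifts form a finite group \<open>G\<close>: a normalized lift is determined by its
  permutation of \<open>L\<close> up to a normalized element of \<open>D\<close>, whose eigenvalues are roots of unity of
  bounded order. The class reflections (\<open>1\<close> on one class, \<open>-1\<close> on the others) are normalized, fix
  every line of \<open>L\<close> and span \<open>D\<close>, so every subspace invariant under the normalized lifts fixing
  some lines of \<open>L\<close> is invariant under all lifts fixing them. Hence \<open>G\<close> inherits irreducibility and
  transitivity from \<open>Sym L\<close>, and a subspace properly containing \<open>l\<close> fixed linewise by the stabilizer
  of \<open>l\<close> in \<open>G\<close> would contain lines arbitrarily close to \<open>l\<close> fixed by its stabilizer in \<open>Sym L\<close>.\<close>

section \<open>Matrices and lines\<close>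

lemma exists_nth_root:
  assumes "(c::complex) \<noteq> 0" "n > 0"
  shows "\<exists>z. z ^ n = c"
proof -
  have "card {z. z ^ n = c} > 0" using card_nth_roots[OF assms] assms(2) by simp
  then show ?thesis by (auto simp: card_gt_0_iff)
qed

lemma matrix_vector_mult_mat: "(mat c :: 'a::semiring_1^'n::finite^'n) *v x = c *s x"
  by (vector matrix_vector_mult_def mat_def) (simp add: if_distrib if_distribR cong del: if_weak_cong)

lemma mat_mult_mat: "(mat a :: 'a::comm_semiring_1^'n::finite^'n) ** mat b = mat (a * b)"
  by (simp add: matrix_eq matrix_vector_mult_mat flip: matrix_vector_mul_assoc)

lemma matrix_mul_mat_commute: "(A :: 'a::comm_semiring_1^'n::finite^'n) ** mat c = mat c ** A"
  by (simp add: matrix_eq matrix_vector_mult_mat flip: matrix_vector_mul_assoc)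
    (simp add: vec_eq_iff matrix_vector_mult_def sum_distrib_left mult_ac)

lemma invertible_mat: "(c::'a::field) \<noteq> 0 \<Longrightarrow> invertible (mat c :: 'a^'n::finite^'n)"
  unfolding invertible_def by (rule exI[of _ "mat (inverse c)"]) (simp add: mat_mult_mat)

lemma
  assumes "invertible A"
  shows matrix_inv_right: "A ** matrix_inv A = mat 1"
    and matrix_inv_left: "matrix_inv A ** A = mat 1"
proof -
  have "\<exists>B. A ** B = mat 1 \<and> B ** A = mat 1" using assms invertible_def by blast
  then have "A ** matrix_inv A = mat 1 \<and> matrix_inv A ** A = mat 1"
    unfolding matrix_inv_def by (rule someI_ex)
  then show "A ** matrix_inv A = mat 1" "matrix_inv A ** A = mat 1" by auto
qed

lemma invertible_matrix_inv: "invertible A \<Longrightarrow> invertible (matrix_inv A)"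
  using matrix_inv_left matrix_inv_right invertible_def by blast

lemma matrix_inv_cancel:
  assumes "invertible A"
  shows "matrix_inv A *v (A *v x) = x" "A *v (matrix_inv A *v x) = x"
  by (simp_all add: matrix_vector_mul_assoc matrix_inv_left matrix_inv_right assms)

definition line_vec :: "'n::finite vecC set \<Rightarrow> 'n vecC" where
  "line_vec l = (SOME x. x \<in> l \<and> x \<noteq> 0)"

lemma
  assumes "is_line l"
  shows line_vec_mem: "line_vec l \<in> l"
    and line_vec_nonzero: "line_vec l \<noteq> 0"
    and line_eq_span_line_vec: "l = vec.span {line_vec l}"
proof -
  obtain v where v: "v \<noteq> 0" "l = range (\<lambda>c. c *s v)" using assms is_line_def by blast
  then have "v \<in> l" by (simp add: range_eqI[of _ _ 1])
  then have "\<exists>x. x \<in> l \<and> x \<noteq> 0" using v by blast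
  then have "line_vec l \<in> l \<and> line_vec l \<noteq> 0" unfolding line_vec_def by (rule someI_ex)
  then show "line_vec l \<in> l" "line_vec l \<noteq> 0" "l = vec.span {line_vec l}"
    using is_line_eq[OF assms] by (auto simp: vec.span_singleton)
qed

lemma line_mem_iff: "is_line l \<Longrightarrow> x \<in> l \<longleftrightarrow> (\<exists>c. x = c *s line_vec l)"
  by (subst line_eq_span_line_vec) (auto simp: vec.span_singleton)

lemma subspace_line: "is_line l \<Longrightarrow> vec.subspace l"
  by (subst line_eq_span_line_vec) auto

lemma line_eqI:
  assumes "is_line l" "is_line m" "x \<in> l" "x \<in> m" "x \<noteq> 0"
  shows "l = m"
  using is_line_eq[OF assms(1,3,5)] is_line_eq[OF assms(2,4,5)] by simp

definition mat_image :: "'n::finite matC \<Rightarrow> 'n vecC set \<Rightarrow> 'n vecC set" where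
  "mat_image A S = (\<lambda>x. A *v x) ` S"

lemma mat_image_mult: "mat_image (A ** B) S = mat_image A (mat_image B S)"
  unfolding mat_image_def by (auto simp flip: matrix_vector_mul_assoc)

lemma mat_image_mat_one [simp]: "mat_image (mat 1) S = S"
  unfolding mat_image_def by simp

lemma mat_image_matrix_inv:
  assumes "invertible A"
  shows "mat_image (matrix_inv A) (mat_image A S) = S" "mat_image A (mat_image (matrix_inv A) S) = S"
  by (simp_all add: mat_image_mult[symmetric] matrix_inv_left matrix_inv_right assms)

lemma inj_mat_image: "invertible A \<Longrightarrow> inj_on (mat_image A) X"
  by (metis inj_onI mat_image_matrix_inv(1))

lemma mat_image_mat_subspace:
  assumes "vec.subspace S" "c \<noteq> 0"
  shows "mat_image (mat c) S = S"
proof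
  show "mat_image (mat c) S \<subseteq> S"
    using assms(1) by (auto simp: mat_image_def matrix_vector_mult_mat vec.subspace_scale)
  show "S \<subseteq> mat_image (mat c) S"
  proof
    fix x assume "x \<in> S"
    then have "x = mat c *v (inverse c *s x)" "inverse c *s x \<in> S"
      using assms by (simp_all add: matrix_vector_mult_mat vector_smult_assoc vec.subspace_scale)
    then show "x \<in> mat_image (mat c) S" unfolding mat_image_def by blast
  qed
qed

lemma mat_image_span_singleton: "mat_image A (vec.span {v}) = vec.span {A *v v}"
  unfolding mat_image_def by (simp flip: vec.linear_span_image[OF matrix_vector_mul_linear_gen])

lemma is_line_mat_image:
  assumes "is_line l" "invertible A"
  shows "is_line (mat_image A l)"
proof -
  have "A *v line_vec l \<noteq> 0"
    using line_vec_nonzero[OF assms(1)] matrix_inv_cancel(1)[OF assms(2), of "line_vec l"] by auto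
  moreover have "mat_image A l = vec.span {A *v line_vec l}"
    using mat_image_span_singleton line_eq_span_line_vec[OF assms(1)] by metis
  ultimately show ?thesis unfolding is_line_def vec.span_singleton by blast
qed

lemma mat_image_line_eq_iff:
  assumes "is_line l" "invertible A"
  shows "mat_image A l = l \<longleftrightarrow> A *v line_vec l \<in> l"
proof
  show "A *v line_vec l \<in> l \<Longrightarrow> mat_image A l = l"
    using line_eqI[OF is_line_mat_image[OF assms] assms(1)] line_vec_mem[OF assms(1)]
      line_vec_nonzero[OF assms(1)] matrix_inv_cancel(1)[OF assms(2), of "line_vec l"]
    by (force simp: mat_image_def)
qed (use line_vec_mem[OF assms(1)] in \<open>auto simp: mat_image_def\<close>)

lemma mat_image_eqI:
  assumes "invertible A" "mat_image A S \<subseteq> S" "mat_image (matrix_inv A) S \<subseteq> S"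
  shows "mat_image A S = S"
proof
  have "S = mat_image A (mat_image (matrix_inv A) S)" using mat_image_matrix_inv(2)[OF assms(1)] by simp
  also have "\<dots> \<subseteq> mat_image A S" using assms(3) by (auto simp: mat_image_def)
  finally show "S \<subseteq> mat_image A S" .
qed (fact assms(2))

definition eigval :: "'n::finite matC \<Rightarrow> 'n vecC set \<Rightarrow> complex" where
  "eigval A l = (SOME c. A *v line_vec l = c *s line_vec l)"

lemma eigval_eqI:
  assumes "is_line l" "A *v line_vec l = c *s line_vec l"
  shows "eigval A l = c"
proof -
  have "A *v line_vec l = eigval A l *s line_vec l"
    unfolding eigval_def using assms(2) by (rule someI)
  then show ?thesis
    using assms line_vec_nonzero vector_mul_rcancel by metis
qed

definition mat_invariant :: "'n::finite matC \<Rightarrow> 'n vecC set \<Rightarrow> bool" where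
  "mat_invariant A S \<longleftrightarrow> mat_image A S \<subseteq> S"

lemma mat_invariant_iff: "mat_invariant A S \<longleftrightarrow> (\<forall>x\<in>S. A *v x \<in> S)"
  unfolding mat_invariant_def mat_image_def by blast

lemma mat_invariant_mat: "vec.subspace S \<Longrightarrow> mat_invariant (mat c) S"
  by (simp add: mat_invariant_iff matrix_vector_mult_mat vec.subspace_scale)

lemma mat_invariant_add:
  "vec.subspace S \<Longrightarrow> mat_invariant A S \<Longrightarrow> mat_invariant B S \<Longrightarrow> mat_invariant (A + B) S"
  by (simp add: mat_invariant_iff matrix_vector_mult_add_rdistrib vec.subspace_add)

lemma mat_invariant_mult:
  "mat_invariant A S \<Longrightarrow> mat_invariant B S \<Longrightarrow> mat_invariant (A ** B) S"
  by (simp add: mat_invariant_iff flip: matrix_vector_mul_assoc)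

lemma mat_invariant_UNIV: "mat_invariant A UNIV"
  by (simp add: mat_invariant_def)

section \<open>The projective linear group\<close>

lemma pgl_class_mem: "M \<in> pgl_class M"
  unfolding pgl_class_def by (rule CollectI, rule exI[of _ 1]) simp

lemma pgl_class_mat_mult:
  assumes "c \<noteq> 0"
  shows "pgl_class (mat c ** M) = pgl_class M"
proof -
  have "{mat a ** (mat c ** M) | a. a \<noteq> 0} = {mat (a * c) ** M | a. a \<noteq> 0}"
    by (simp add: matrix_mul_assoc mat_mult_mat)
  also have "\<dots> = {mat b ** M | b. b \<noteq> 0}"
  proof (intro Collect_cong iffI)
    fix X assume "\<exists>a. X = mat (a * c) ** M \<and> a \<noteq> 0"
    then show "\<exists>b. X = mat b ** M \<and> b \<noteq> 0" using assms by auto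
  next
    fix X assume "\<exists>b. X = mat b ** M \<and> b \<noteq> 0"
    then obtain b where "X = mat b ** M" "b \<noteq> 0" by blast
    then show "\<exists>a. X = mat (a * c) ** M \<and> a \<noteq> 0"
      using assms by (intro exI[of _ "b / c"]) simp
  qed
  finally show ?thesis unfolding pgl_class_def .
qed

lemma pgl_rep_class: "\<exists>c. c \<noteq> 0 \<and> pgl_rep (pgl_class M) = mat c ** M"
proof -
  have "pgl_rep (pgl_class M) \<in> pgl_class M"
    unfolding pgl_rep_def by (rule someI[of _ M]) (rule pgl_class_mem)
  then show ?thesis unfolding pgl_class_def by auto
qed

lemma pgl_apply_class:
  assumes "vec.subspace S"
  shows "pgl_apply (pgl_class M) S = mat_image M S"
proof -
  obtain c where c: "c \<noteq> 0" "pgl_rep (pgl_class M) = mat c ** M" using pgl_rep_class by blast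
  have "pgl_apply (pgl_class M) S = mat_image (M ** mat c) S"
    unfolding pgl_apply_def mat_image_def c(2) matrix_mul_mat_commute ..
  also have "\<dots> = mat_image M S"
    unfolding mat_image_mult mat_image_mat_subspace[OF assms c(1)] ..
  finally show ?thesis .
qed

lemma PGL_mult_class: "pgl_class A \<otimes>\<^bsub>PGL_group\<^esub> pgl_class B = pgl_class (A ** B)"
proof -
  obtain a where a: "a \<noteq> 0" "pgl_rep (pgl_class A) = mat a ** A" using pgl_rep_class by blast
  obtain b where b: "b \<noteq> 0" "pgl_rep (pgl_class B) = mat b ** B" using pgl_rep_class by blast
  have "(mat a ** A) ** (mat b ** B) = mat a ** ((A ** mat b) ** B)"
    by (simp only: matrix_mul_assoc)
  also have "\<dots> = mat (a * b) ** (A ** B)"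
    by (simp only: matrix_mul_mat_commute[of A b] matrix_mul_assoc mat_mult_mat)
  finally have "(mat a ** A) ** (mat b ** B) = mat (a * b) ** (A ** B)" .
  then show ?thesis
    using pgl_class_mat_mult[of "a * b"] a b by (simp add: PGL_group_def)
qed

lemma PGL_one: "\<one>\<^bsub>PGL_group\<^esub> = pgl_class (mat 1)"
  by (simp add: PGL_group_def)

lemma pgl_class_mem_PGL: "invertible A \<Longrightarrow> pgl_class A \<in> carrier PGL_group"
  unfolding PGL_group_def PGL_def by auto

lemma carrier_PGL_group_E:
  assumes "g \<in> carrier PGL_group"
  obtains A where "invertible A" "g = pgl_class A"
  using assms unfolding PGL_group_def PGL_def by auto

lemma group_PGL: "group (PGL_group :: 'n::finite matC set monoid)"
proof (rule groupI)
  show "\<one>\<^bsub>PGL_group\<^esub> \<in> carrier (PGL_group :: 'n matC set monoid)"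
    unfolding PGL_one by (rule pgl_class_mem_PGL[OF invertible_mat]) simp
next
  fix x y :: "'n matC set"
  assume "x \<in> carrier PGL_group" "y \<in> carrier PGL_group"
  then obtain A B where "invertible A" "x = pgl_class A" "invertible B" "y = pgl_class B"
    by (elim carrier_PGL_group_E)
  then show "x \<otimes>\<^bsub>PGL_group\<^esub> y \<in> carrier PGL_group"
    by (simp add: PGL_mult_class pgl_class_mem_PGL invertible_mult)
next
  fix x y z :: "'n matC set"
  assume "x \<in> carrier PGL_group" "y \<in> carrier PGL_group" "z \<in> carrier PGL_group"
  then obtain A B C where "x = pgl_class A" "y = pgl_class B" "z = pgl_class C"
    by (elim carrier_PGL_group_E)
  then show "x \<otimes>\<^bsub>PGL_group\<^esub> y \<otimes>\<^bsub>PGL_group\<^esub> z = x \<otimes>\<^bsub>PGL_group\<^esub> (y \<otimes>\<^bsub>PGL_group\<^esub> z)"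
    by (simp only: PGL_mult_class matrix_mul_assoc)
next
  fix x :: "'n matC set"
  assume "x \<in> carrier PGL_group"
  then obtain A where A: "invertible A" "x = pgl_class A" by (elim carrier_PGL_group_E)
  show "\<one>\<^bsub>PGL_group\<^esub> \<otimes>\<^bsub>PGL_group\<^esub> x = x"
    unfolding A(2) PGL_one PGL_mult_class matrix_mul_lid ..
  have "pgl_class (matrix_inv A) \<otimes>\<^bsub>PGL_group\<^esub> x = \<one>\<^bsub>PGL_group\<^esub>"
    unfolding A(2) PGL_one PGL_mult_class matrix_inv_left[OF A(1)] ..
  then show "\<exists>y\<in>carrier PGL_group. y \<otimes>\<^bsub>PGL_group\<^esub> x = \<one>\<^bsub>PGL_group\<^esub>"
    using pgl_class_mem_PGL[OF invertible_matrix_inv[OF A(1)]] by blast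
qed

lemma PGL_inv_class:
  assumes "invertible A"
  shows "inv\<^bsub>PGL_group\<^esub> (pgl_class A) = pgl_class (matrix_inv A)"
  by (rule group.inv_equality[OF group_PGL])
    (simp_all add: PGL_mult_class matrix_inv_left assms invertible_matrix_inv pgl_class_mem_PGL
      PGL_one)

lemma subgroup_pgl_class_image:
  assumes "\<And>A. A \<in> M \<Longrightarrow> invertible A" "mat 1 \<in> M"
    and "\<And>A B. A \<in> M \<Longrightarrow> B \<in> M \<Longrightarrow> A ** B \<in> M"
    and "\<And>A. A \<in> M \<Longrightarrow> matrix_inv A \<in> M"
  shows "subgroup (pgl_class ` M) PGL_group"
proof (rule group.subgroupI[OF group_PGL])
  show "pgl_class ` M \<subseteq> carrier PGL_group" using assms(1) pgl_class_mem_PGL by blast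
  show "pgl_class ` M \<noteq> {}" using assms(2) by blast
  show "inv\<^bsub>PGL_group\<^esub> a \<in> pgl_class ` M" if "a \<in> pgl_class ` M" for a
    using that by (auto simp: PGL_inv_class assms(1) intro!: imageI assms(4))
  show "a \<otimes>\<^bsub>PGL_group\<^esub> b \<in> pgl_class ` M" if "a \<in> pgl_class ` M" "b \<in> pgl_class ` M" for a b
    using that by (auto simp: PGL_mult_class intro!: imageI assms(3))
qed

section \<open>Lines near a given line\<close>

lemma openin_proj_top: "openin proj_top = proj_open"
  unfolding proj_top_def by (rule topology_inverse'[OF istopology_proj_open])

lemma scaleR_eq_of_real_smult: "t *\<^sub>R (v :: 'n::finite vecC) = complex_of_real t *s v"
proof (rule vec_eq_iff[THEN iffD2], rule allI)
  fix i
  have "(t *\<^sub>R v) $ i = complex_of_real t * v $ i"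
    by (rule trans[OF vector_scaleR_component scaleR_conv_of_real])
  then show "(t *\<^sub>R v) $ i = (complex_of_real t *s v) $ i" by simp
qed

text \<open>Move the spanning vector of \<open>l\<close> slightly towards a vector of \<open>W\<close> outside \<open>l\<close>.\<close>
lemma proj_open_nbhd_meets_subspace:
  assumes N: "openin proj_top N" "l \<in> N" and l: "is_line l" and W: "vec.subspace W" "l \<subset> W"
  obtains m where "m \<in> N" "is_line m" "m \<noteq> l" "m \<subseteq> W"
proof -
  have lines_N: "\<forall>m\<in>N. is_line m" and open_N: "open (\<Union>N - {0})"
    using N(1) unfolding openin_proj_top proj_open_def by auto
  define x where "x = line_vec l"
  have x: "x \<in> l" "x \<noteq> 0" unfolding x_def using line_vec_mem line_vec_nonzero l by auto
  then obtain e where e: "e > 0" "ball x e \<subseteq> \<Union>N - {0}"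
    using N(2) open_N open_contains_ball by blast
  obtain v where v: "v \<in> W" "v \<notin> l" using W(2) by blast
  define t where "t = e / (2 * (norm v + 1))"
  have denom: "0 < 2 * (norm v + 1)" by (simp add: add_nonneg_pos)
  have t: "t > 0" unfolding t_def using e(1) denom by simp
  have "t * norm v < t * (norm v + 1)" using t by simp
  also have "\<dots> = e / 2" using denom unfolding t_def by (simp add: field_simps)
  also have "\<dots> < e" using e(1) by simp
  finally have tv: "t * norm v < e" .
  define y where "y = x + complex_of_real t *s v"
  have "y \<in> ball x e"
    using t tv by (simp add: y_def dist_norm flip: scaleR_eq_of_real_smult)
  then obtain m where m: "m \<in> N" "y \<in> m" "y \<noteq> 0" using e(2) by blast
  have m_line: "is_line m" using lines_N m(1) by blast
  have "y \<notin> l"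
  proof
    assume "y \<in> l"
    then have "inverse (complex_of_real t) *s (y - x) \<in> l"
      using x(1) subspace_line[OF l] by (simp add: vec.subspace_diff vec.subspace_scale)
    then show False using v(2) t(1) by (simp add: y_def vector_smult_assoc)
  qed
  moreover have "y \<in> W"
    unfolding y_def using W x(1) v(1) by (blast intro: vec.subspace_add vec.subspace_scale)
  then have "m \<subseteq> W"
    using is_line_eq[OF m_line m(2,3)] vec.subspace_scale[OF W(1)] by blast
  ultimately show thesis using that m(1,2) m_line by blast
qed

section \<open>The diagonal algebra of a line system\<close>

locale spanning_lines =
  fixes L :: "'n::finite vecC set set"
  assumes line_system: "line_system L"
begin

lemma finite_lines: "finite L"
  and is_line_L: "l \<in> L \<Longrightarrow> is_line l"
  and span_lines: "vec.span (\<Union>L) = UNIV"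
  using line_system unfolding line_system_def by auto

lemma span_line_vecs: "vec.span (line_vec ` L) = UNIV"
proof -
  have "l \<subseteq> vec.span (line_vec ` L)" if "l \<in> L" for l
    using that line_eq_span_line_vec[OF is_line_L[OF that]] vec.span_mono[of "{line_vec l}"] by auto
  then have "vec.span (\<Union>L) \<subseteq> vec.span (line_vec ` L)" by (intro vec.span_minimal) auto
  then show ?thesis using span_lines by auto
qed

lemma matrix_eqI_on_lines:
  assumes "\<And>l. l \<in> L \<Longrightarrow> A *v line_vec l = B *v line_vec l"
  shows "A = B"
proof -
  have "A *v x = B *v x" for x
    using vec.linear_eq_on_span[OF matrix_vector_mul_linear_gen[of A] matrix_vector_mul_linear_gen[of B],
        of "line_vec ` L" x] assms span_line_vecs by auto
  then show ?thesis by (simp add: matrix_eq)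
qed

definition diag_mats :: "'n matC set" where
  "diag_mats = {A. \<forall>l\<in>L. A *v line_vec l \<in> l}"

lemma diag_mats_eigval:
  assumes "A \<in> diag_mats" "l \<in> L"
  shows "A *v line_vec l = eigval A l *s line_vec l"
proof -
  obtain c where "A *v line_vec l = c *s line_vec l"
    using assms line_mem_iff[OF is_line_L[OF assms(2)]] unfolding diag_mats_def by blast
  moreover from this have "eigval A l = c" by (rule eigval_eqI[OF is_line_L[OF assms(2)]])
  ultimately show ?thesis by simp
qed

lemma
  assumes "\<And>l. l \<in> L \<Longrightarrow> A *v line_vec l = f l *s line_vec l"
  shows diag_matsI: "A \<in> diag_mats"
    and eigval_diag_matI: "l \<in> L \<Longrightarrow> eigval A l = f l"
proof -
  show "A \<in> diag_mats"
    unfolding diag_mats_def using assms line_mem_iff[OF is_line_L] by blast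
  show "l \<in> L \<Longrightarrow> eigval A l = f l"
    using assms eigval_eqI[OF is_line_L] by blast
qed

lemma diag_mats_eqI:
  assumes "A \<in> diag_mats" "B \<in> diag_mats" "\<And>l. l \<in> L \<Longrightarrow> eigval A l = eigval B l"
  shows "A = B"
  by (rule matrix_eqI_on_lines) (simp add: assms diag_mats_eigval)

lemma diag_mats_mat: "mat c \<in> diag_mats"
  and eigval_mat: "l \<in> L \<Longrightarrow> eigval (mat c) l = c"
  by (rule diag_matsI eigval_diag_matI, rule matrix_vector_mult_mat)+

lemma
  assumes "A \<in> diag_mats" "B \<in> diag_mats"
  shows diag_mats_add: "A + B \<in> diag_mats"
    and eigval_add: "l \<in> L \<Longrightarrow> eigval (A + B) l = eigval A l + eigval B l"
proof -
  have *: "(A + B) *v line_vec l = (eigval A l + eigval B l) *s line_vec l" if "l \<in> L" for l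
    using that by (simp add: assms diag_mats_eigval matrix_vector_mult_add_rdistrib vector_sadd_rdistrib)
  show "A + B \<in> diag_mats" by (rule diag_matsI[OF *])
  show "l \<in> L \<Longrightarrow> eigval (A + B) l = eigval A l + eigval B l" by (rule eigval_diag_matI[OF *])
qed

lemma
  assumes "A \<in> diag_mats" "B \<in> diag_mats"
  shows diag_mats_diff: "A - B \<in> diag_mats"
    and eigval_diff: "l \<in> L \<Longrightarrow> eigval (A - B) l = eigval A l - eigval B l"
proof -
  have *: "(A - B) *v line_vec l = (eigval A l - eigval B l) *s line_vec l" if "l \<in> L" for l
    using that by (simp add: assms diag_mats_eigval matrix_vector_mult_diff_rdistrib vec_eq_iff
        algebra_simps)
  show "A - B \<in> diag_mats" by (rule diag_matsI[OF *])
  show "l \<in> L \<Longrightarrow> eigval (A - B) l = eigval A l - eigval B l" by (rule eigval_diag_matI[OF *])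
qed

lemma
  assumes "A \<in> diag_mats" "B \<in> diag_mats"
  shows diag_mats_mult: "A ** B \<in> diag_mats"
    and eigval_mult: "l \<in> L \<Longrightarrow> eigval (A ** B) l = eigval A l * eigval B l"
proof -
  have *: "(A ** B) *v line_vec l = (eigval A l * eigval B l) *s line_vec l" if "l \<in> L" for l
    using that by (simp add: assms diag_mats_eigval vec.scale mult.commute
        flip: matrix_vector_mul_assoc)
  show "A ** B \<in> diag_mats" by (rule diag_matsI[OF *])
  show "l \<in> L \<Longrightarrow> eigval (A ** B) l = eigval A l * eigval B l" by (rule eigval_diag_matI[OF *])
qed

lemma
  assumes "A \<in> diag_mats"
  shows diag_mats_mat_mult: "mat c ** A \<in> diag_mats"
    and eigval_mat_mult: "l \<in> L \<Longrightarrow> eigval (mat c ** A) l = c * eigval A l"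
  by (rule diag_mats_mult[OF diag_mats_mat assms])
    (simp add: eigval_mult[OF diag_mats_mat assms] eigval_mat)

definition diag_equiv :: "'n vecC set \<Rightarrow> 'n vecC set \<Rightarrow> bool" where
  "diag_equiv l l' \<longleftrightarrow> (\<forall>d\<in>diag_mats. eigval d l = eigval d l')"

definition diag_class :: "'n vecC set \<Rightarrow> 'n vecC set set" where
  "diag_class l = {l' \<in> L. diag_equiv l l'}"

lemma diag_equiv_refl: "diag_equiv l l"
  and diag_equiv_sym: "diag_equiv l l' \<Longrightarrow> diag_equiv l' l"
  and diag_equiv_trans: "diag_equiv l l' \<Longrightarrow> diag_equiv l' l'' \<Longrightarrow> diag_equiv l l''"
  unfolding diag_equiv_def by auto

lemma diag_class_eq: "diag_equiv l l' \<Longrightarrow> diag_class l = diag_class l'"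
  unfolding diag_class_def using diag_equiv_sym diag_equiv_trans by blast

lemma diag_class_subset: "diag_class l \<subseteq> L"
  unfolding diag_class_def by blast

lemma finite_diag_class: "finite (diag_class l)"
  using finite_subset[OF diag_class_subset finite_lines] .

lemma card_diag_class_pos: "l \<in> L \<Longrightarrow> card (diag_class l) > 0"
  using finite_diag_class diag_equiv_refl unfolding diag_class_def by (auto simp: card_gt_0_iff)

lemma card_diag_class_le: "card (diag_class l) \<le> card L"
  by (rule card_mono[OF finite_lines diag_class_subset])

lemma diag_separation:
  assumes "l0 \<in> L" "l1 \<in> L" "\<not> diag_equiv l0 l1"
  obtains Q where "Q \<in> diag_mats" "\<And>l. l \<in> L \<Longrightarrow> diag_equiv l0 l \<Longrightarrow> eigval Q l = 1"
    "eigval Q l1 = 0"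
proof -
  obtain d where d: "d \<in> diag_mats" "eigval d l0 \<noteq> eigval d l1"
    using assms(3) unfolding diag_equiv_def by blast
  define Q where "Q = mat (1 / (eigval d l0 - eigval d l1)) ** (d - mat (eigval d l1))"
  have Q_diag: "Q \<in> diag_mats"
    unfolding Q_def by (intro diag_mats_mat_mult diag_mats_diff d diag_mats_mat)
  have eigval_Q: "eigval Q l = (eigval d l - eigval d l1) / (eigval d l0 - eigval d l1)"
    if "l \<in> L" for l
    unfolding Q_def using that
    by (simp add: eigval_mat_mult eigval_diff d diag_mats_diff diag_mats_mat eigval_mat)
  show ?thesis
  proof (rule that[OF Q_diag])
    fix l assume "l \<in> L" "diag_equiv l0 l"
    then show "eigval Q l = 1"
      using eigval_Q d unfolding diag_equiv_def by auto
  qed (simp add: eigval_Q assms(2))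
qed

lemma exists_class_indicator:
  assumes "l0 \<in> L"
  shows "\<exists>P\<in>diag_mats. \<forall>l\<in>L. eigval P l = (if diag_equiv l0 l then 1 else 0)"
proof -
  have "\<exists>P\<in>diag_mats. (\<forall>l\<in>L. diag_equiv l0 l \<longrightarrow> eigval P l = 1)
          \<and> (\<forall>l\<in>X. \<not> diag_equiv l0 l \<longrightarrow> eigval P l = 0)"
    if "finite X" "X \<subseteq> L" for X
    using that
  proof (induction X rule: finite_subset_induct')
    case empty
    show ?case by (rule bexI[of _ "mat 1"]) (auto simp: diag_mats_mat eigval_mat)
  next
    case (insert x X)
    then obtain P where P: "P \<in> diag_mats" "\<forall>l\<in>L. diag_equiv l0 l \<longrightarrow> eigval P l = 1"
      "\<forall>l\<in>X. \<not> diag_equiv l0 l \<longrightarrow> eigval P l = 0"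
      by blast
    show ?case
    proof (cases "diag_equiv l0 x")
      case True
      then show ?thesis using P by blast
    next
      case False
      obtain Q where Q: "Q \<in> diag_mats" "\<And>l. l \<in> L \<Longrightarrow> diag_equiv l0 l \<Longrightarrow> eigval Q l = 1"
        "eigval Q x = 0"
        using diag_separation[OF assms \<open>x \<in> L\<close> False] by blast
      show ?thesis
        using P Q \<open>x \<in> L\<close> \<open>X \<subseteq> L\<close>
        by (intro bexI[of _ "Q ** P"]) (auto simp: eigval_mult diag_mats_mult)
    qed
  qed
  from this[OF finite_lines order_refl] show ?thesis by auto
qed

definition class_proj :: "'n vecC set \<Rightarrow> 'n matC" where
  "class_proj l0 = (SOME P. P \<in> diag_mats \<and> (\<forall>l\<in>L. eigval P l = (if diag_equiv l0 l then 1 else 0)))"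

lemma
  assumes "l0 \<in> L"
  shows class_proj_diag: "class_proj l0 \<in> diag_mats"
    and eigval_class_proj: "l \<in> L \<Longrightarrow> eigval (class_proj l0) l = (if diag_equiv l0 l then 1 else 0)"
proof -
  have "class_proj l0 \<in> diag_mats
      \<and> (\<forall>l\<in>L. eigval (class_proj l0) l = (if diag_equiv l0 l then 1 else 0))"
    unfolding class_proj_def by (rule someI_ex) (use exists_class_indicator[OF assms] in blast)
  then show "class_proj l0 \<in> diag_mats"
    "l \<in> L \<Longrightarrow> eigval (class_proj l0) l = (if diag_equiv l0 l then 1 else 0)"
    by auto
qed

lemma diag_interpolate:
  assumes "vec.subspace S" "\<And>l. l \<in> L \<Longrightarrow> mat_invariant (class_proj l) S"
    and "\<And>l l'. l \<in> L \<Longrightarrow> l' \<in> L \<Longrightarrow> diag_equiv l l' \<Longrightarrow> f l = f l'"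
  shows "\<exists>d\<in>diag_mats. mat_invariant d S \<and> (\<forall>l\<in>L. eigval d l = f l)"
proof -
  have "\<exists>d\<in>diag_mats. mat_invariant d S \<and> (\<forall>l\<in>X. eigval d l = f l)"
    if "finite X" "X \<subseteq> L" for X
    using that
  proof (induction X rule: finite_subset_induct')
    case empty
    show ?case using diag_mats_mat mat_invariant_mat[OF assms(1)] by blast
  next
    case (insert x X)
    then obtain d where d: "d \<in> diag_mats" "mat_invariant d S" "\<forall>l\<in>X. eigval d l = f l"
      by blast
    define d' where "d' = d + mat (f x - eigval d x) ** class_proj x"
    have "d' \<in> diag_mats"
      unfolding d'_def by (intro diag_mats_add d diag_mats_mat_mult class_proj_diag \<open>x \<in> L\<close>)
    moreover have "mat_invariant d' S"
      unfolding d'_def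
      by (intro mat_invariant_add mat_invariant_mult mat_invariant_mat assms(1,2) d(2) \<open>x \<in> L\<close>)
    moreover have "eigval d' l = f l" if "l \<in> insert x X" for l
    proof -
      have l: "l \<in> L" using that insert.hyps by auto
      have "eigval d' l = eigval d l + (f x - eigval d x) * (if diag_equiv x l then 1 else 0)"
        unfolding d'_def using l \<open>x \<in> L\<close>
        by (simp add: eigval_add eigval_mat_mult d diag_mats_mat_mult class_proj_diag
            eigval_class_proj)
      also have "\<dots> = f l"
      proof (cases "diag_equiv x l")
        case True
        then show ?thesis
          using d(1) assms(3)[OF \<open>x \<in> L\<close> l] unfolding diag_equiv_def by auto
      next
        case False
        then show ?thesis using that d(3) diag_equiv_refl by auto
      qed
      finally show ?thesis .
    qed
    ultimately show ?case by blast
  qed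
  from this[OF finite_lines order_refl] show ?thesis .
qed

lemma exists_diag_mat:
  assumes "\<And>l l'. l \<in> L \<Longrightarrow> l' \<in> L \<Longrightarrow> diag_equiv l l' \<Longrightarrow> f l = f l'"
  obtains d where "d \<in> diag_mats" "\<And>l. l \<in> L \<Longrightarrow> eigval d l = f l"
proof -
  have "\<exists>d\<in>diag_mats. mat_invariant d UNIV \<and> (\<forall>l\<in>L. eigval d l = f l)"
    by (rule diag_interpolate) (auto simp: mat_invariant_UNIV intro: assms)
  with that show thesis by blast
qed

definition class_refl :: "'n vecC set \<Rightarrow> 'n matC" where
  "class_refl l0 = mat 2 ** class_proj l0 - mat 1"

lemma
  assumes "l0 \<in> L"
  shows class_refl_diag: "class_refl l0 \<in> diag_mats"
    and eigval_class_refl: "l \<in> L \<Longrightarrow> eigval (class_refl l0) l = (if diag_equiv l0 l then 1 else -1)"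
  unfolding class_refl_def using assms
  by (simp_all add: diag_mats_diff diag_mats_mat_mult class_proj_diag diag_mats_mat eigval_diff
      eigval_mat_mult eigval_class_proj eigval_mat)

lemma class_proj_eq_class_refl:
  assumes "l0 \<in> L"
  shows "class_proj l0 = mat (1/2) ** (class_refl l0 + mat 1)"
  using assms
  by (intro diag_mats_eqI)
    (simp_all add: class_proj_diag diag_mats_mat_mult diag_mats_add class_refl_diag diag_mats_mat
      eigval_mat_mult eigval_add eigval_class_refl eigval_mat eigval_class_proj)

lemma diag_mats_invariant:
  assumes "vec.subspace S" "\<And>l. l \<in> L \<Longrightarrow> mat_invariant (class_refl l) S" "d \<in> diag_mats"
  shows "mat_invariant d S"
proof -
  have "mat_invariant (class_proj l) S" if "l \<in> L" for l
    unfolding class_proj_eq_class_refl[OF that]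
    by (intro mat_invariant_mult mat_invariant_add mat_invariant_mat assms(1,2) that)
  from diag_interpolate[OF assms(1) this, of "eigval d"]
  obtain d' where "d' \<in> diag_mats" "mat_invariant d' S" "\<forall>l\<in>L. eigval d' l = eigval d l"
    using assms(3) unfolding diag_equiv_def by blast
  moreover from this have "d' = d" using assms(3) diag_mats_eqI by blast
  ultimately show ?thesis by simp
qed

lemma invertible_diag_mat:
  assumes "d \<in> diag_mats" "\<And>l. l \<in> L \<Longrightarrow> eigval d l \<noteq> 0"
  shows "invertible d"
proof -
  obtain e where e: "e \<in> diag_mats" "\<And>l. l \<in> L \<Longrightarrow> eigval e l = inverse (eigval d l)"
    by (rule exists_diag_mat[of "\<lambda>l. inverse (eigval d l)"]) (use assms(1) in \<open>auto simp: diag_equiv_def\<close>)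
  have "e ** d = mat 1"
    by (rule diag_mats_eqI) (use e assms in \<open>auto simp: diag_mats_mult diag_mats_mat eigval_mult eigval_mat\<close>)
  then show ?thesis unfolding invertible_left_inverse by blast
qed

lemma mat_image_diag_line:
  assumes "d \<in> diag_mats" "invertible d" "l \<in> L"
  shows "mat_image d l = l"
  using assms mat_image_line_eq_iff[OF is_line_L[OF assms(3)] assms(2)] unfolding diag_mats_def by blast

lemma diag_mats_matrix_inv:
  assumes "d \<in> diag_mats" "invertible d"
  shows "matrix_inv d \<in> diag_mats"
  unfolding diag_mats_def
proof (intro CollectI ballI)
  fix l assume l: "l \<in> L"
  have "mat_image (matrix_inv d) l = l"
    using mat_image_matrix_inv(1)[OF assms(2), of l] mat_image_diag_line[OF assms l] by simp
  then show "matrix_inv d *v line_vec l \<in> l"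
    unfolding mat_image_def using line_vec_mem[OF is_line_L[OF l]] by blast
qed

section \<open>Normalized symmetries\<close>

definition sym_mats :: "'n matC set" where
  "sym_mats = {A. invertible A \<and> mat_image A ` L = L}"

lemma sym_mats_invertible: "A \<in> sym_mats \<Longrightarrow> invertible A"
  unfolding sym_mats_def by blast

lemma mat_image_sym_mat_mem: "A \<in> sym_mats \<Longrightarrow> l \<in> L \<Longrightarrow> mat_image A l \<in> L"
  unfolding sym_mats_def by blast

lemma sym_mats_mat_one: "mat 1 \<in> sym_mats"
  unfolding sym_mats_def by (simp add: invertible_mat)

lemma sym_mats_mult:
  assumes "A \<in> sym_mats" "B \<in> sym_mats"
  shows "A ** B \<in> sym_mats"
proof -
  have "mat_image (A ** B) ` L = mat_image A ` mat_image B ` L"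
    by (simp add: mat_image_mult image_comp comp_def)
  then show ?thesis using assms invertible_mult unfolding sym_mats_def by auto
qed

lemma sym_mats_matrix_inv:
  assumes "A \<in> sym_mats"
  shows "matrix_inv A \<in> sym_mats"
proof -
  have "mat_image (matrix_inv A) ` L = mat_image (matrix_inv A) ` mat_image A ` L"
    using assms unfolding sym_mats_def by simp
  also have "\<dots> = L"
    by (simp add: image_comp comp_def mat_image_matrix_inv sym_mats_invertible[OF assms])
  finally show ?thesis
    using invertible_matrix_inv sym_mats_invertible[OF assms] unfolding sym_mats_def by blast
qed

lemma diag_sym_mat: "d \<in> diag_mats \<Longrightarrow> invertible d \<Longrightarrow> d \<in> sym_mats"
  unfolding sym_mats_def using mat_image_diag_line by simp

lemma Sym_eq_pgl_class_image: "Sym L = pgl_class ` sym_mats"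
proof -
  have *: "pgl_apply (pgl_class M) ` L = mat_image M ` L" for M
    using pgl_apply_class[OF subspace_line[OF is_line_L]] by simp
  show ?thesis
  proof (intro equalityI subsetI)
    fix g assume "g \<in> Sym L"
    then obtain M where "invertible M" "g = pgl_class M" "pgl_apply g ` L = L"
      unfolding Sym_def PGL_def by blast
    then have "M \<in> sym_mats" "g = pgl_class M" by (simp_all add: sym_mats_def *)
    then show "g \<in> pgl_class ` sym_mats" by blast
  next
    fix g assume "g \<in> pgl_class ` sym_mats"
    then obtain M where "M \<in> sym_mats" "g = pgl_class M" by blast
    then show "g \<in> Sym L" unfolding Sym_def PGL_def sym_mats_def by (simp add: *) blast
  qed
qed

definition perm_coeff :: "'n matC \<Rightarrow> 'n vecC set \<Rightarrow> complex" where
  "perm_coeff A l = (SOME c. A *v line_vec l = c *s line_vec (mat_image A l))"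

lemma perm_coeff_eqI:
  assumes "A \<in> sym_mats" "l \<in> L" "A *v line_vec l = c *s line_vec (mat_image A l)"
  shows "perm_coeff A l = c"
proof -
  have "A *v line_vec l = perm_coeff A l *s line_vec (mat_image A l)"
    unfolding perm_coeff_def using assms(3) by (rule someI)
  then show ?thesis
    using assms(3) line_vec_nonzero[OF is_line_L[OF mat_image_sym_mat_mem[OF assms(1,2)]]]
      vector_mul_rcancel by metis
qed

lemma perm_coeff:
  assumes "A \<in> sym_mats" "l \<in> L"
  shows "A *v line_vec l = perm_coeff A l *s line_vec (mat_image A l)"
proof -
  have "A *v line_vec l \<in> mat_image A l"
    unfolding mat_image_def using line_vec_mem[OF is_line_L[OF assms(2)]] by blast
  then obtain c where "A *v line_vec l = c *s line_vec (mat_image A l)"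
    using line_mem_iff[OF is_line_L[OF mat_image_sym_mat_mem[OF assms]]] by blast
  with perm_coeff_eqI[OF assms this] show ?thesis by simp
qed

lemma perm_coeff_nonzero:
  assumes "A \<in> sym_mats" "l \<in> L"
  shows "perm_coeff A l \<noteq> 0"
proof
  assume "perm_coeff A l = 0"
  then have "matrix_inv A *v (A *v line_vec l) = 0" using perm_coeff[OF assms] by simp
  then show False
    using matrix_inv_cancel(1)[OF sym_mats_invertible[OF assms(1)]] line_vec_nonzero[OF is_line_L[OF assms(2)]]
    by simp
qed

lemma perm_coeff_mult:
  assumes "A \<in> sym_mats" "B \<in> sym_mats" "l \<in> L"
  shows "perm_coeff (A ** B) l = perm_coeff A (mat_image B l) * perm_coeff B l"
proof (rule perm_coeff_eqI[OF sym_mats_mult[OF assms(1,2)] assms(3)])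
  have "(A ** B) *v line_vec l = perm_coeff B l *s (A *v line_vec (mat_image B l))"
    by (simp add: perm_coeff[OF assms(2,3)] vec.scale flip: matrix_vector_mul_assoc)
  also have "\<dots> = (perm_coeff A (mat_image B l) * perm_coeff B l) *s line_vec (mat_image (A ** B) l)"
    by (simp add: perm_coeff[OF assms(1) mat_image_sym_mat_mem[OF assms(2,3)]] mat_image_mult
        mult.commute)
  finally show "(A ** B) *v line_vec l
      = (perm_coeff A (mat_image B l) * perm_coeff B l) *s line_vec (mat_image (A ** B) l)" .
qed

lemma perm_coeff_diag:
  assumes "d \<in> diag_mats" "invertible d" "l \<in> L"
  shows "perm_coeff d l = eigval d l"
  using assms
  by (intro perm_coeff_eqI diag_sym_mat) (simp_all add: mat_image_diag_line diag_mats_eigval)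

lemma conj_diag_mat:
  assumes "A \<in> sym_mats" "d \<in> diag_mats"
  shows "matrix_inv A ** d ** A \<in> diag_mats"
    and "l \<in> L \<Longrightarrow> eigval (matrix_inv A ** d ** A) l = eigval d (mat_image A l)"
proof -
  have *: "(matrix_inv A ** d ** A) *v line_vec l = eigval d (mat_image A l) *s line_vec l"
    if "l \<in> L" for l
  proof -
    define c where "c = perm_coeff A l"
    have Av: "A *v line_vec l = c *s line_vec (mat_image A l)"
      unfolding c_def by (rule perm_coeff[OF assms(1) that])
    have "(matrix_inv A ** d ** A) *v line_vec l = matrix_inv A *v (d *v (c *s line_vec (mat_image A l)))"
      by (simp add: Av flip: matrix_vector_mul_assoc)
    also have "\<dots> = eigval d (mat_image A l) *s (matrix_inv A *v (A *v line_vec l))"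
      by (simp add: Av vec.scale diag_mats_eigval[OF assms(2) mat_image_sym_mat_mem[OF assms(1) that]]
          vector_smult_assoc mult.commute)
    also have "\<dots> = eigval d (mat_image A l) *s line_vec l"
      by (simp add: matrix_inv_cancel sym_mats_invertible[OF assms(1)])
    finally show ?thesis .
  qed
  show "matrix_inv A ** d ** A \<in> diag_mats" by (rule diag_matsI[OF *])
  show "l \<in> L \<Longrightarrow> eigval (matrix_inv A ** d ** A) l = eigval d (mat_image A l)"
    by (rule eigval_diag_matI[OF *])
qed

lemma diag_equiv_mat_image:
  assumes "A \<in> sym_mats" "l \<in> L" "l' \<in> L" "diag_equiv l l'"
  shows "diag_equiv (mat_image A l) (mat_image A l')"
  unfolding diag_equiv_def
proof
  fix d assume d: "d \<in> diag_mats"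
  have "eigval d (mat_image A l) = eigval (matrix_inv A ** d ** A) l"
    using conj_diag_mat[OF assms(1) d] assms(2) by simp
  also have "\<dots> = eigval (matrix_inv A ** d ** A) l'"
    using assms(4) conj_diag_mat(1)[OF assms(1) d] unfolding diag_equiv_def by blast
  also have "\<dots> = eigval d (mat_image A l')"
    using conj_diag_mat[OF assms(1) d] assms(3) by simp
  finally show "eigval d (mat_image A l) = eigval d (mat_image A l')" .
qed

lemma diag_class_mat_image:
  assumes "A \<in> sym_mats" "l \<in> L"
  shows "diag_class (mat_image A l) = mat_image A ` diag_class l"
proof
  show "mat_image A ` diag_class l \<subseteq> diag_class (mat_image A l)"
    using diag_equiv_mat_image[OF assms(1,2)] mat_image_sym_mat_mem[OF assms(1)]
    unfolding diag_class_def by blast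
  show "diag_class (mat_image A l) \<subseteq> mat_image A ` diag_class l"
  proof
    fix m assume "m \<in> diag_class (mat_image A l)"
    then have m: "m \<in> L" "diag_equiv (mat_image A l) m" unfolding diag_class_def by auto
    have A': "matrix_inv A \<in> sym_mats" by (rule sym_mats_matrix_inv[OF assms(1)])
    have "diag_equiv l (mat_image (matrix_inv A) m)"
      using diag_equiv_mat_image[OF A' mat_image_sym_mat_mem[OF assms] m]
      by (simp add: mat_image_matrix_inv sym_mats_invertible[OF assms(1)])
    then have "mat_image (matrix_inv A) m \<in> diag_class l"
      using mat_image_sym_mat_mem[OF A' m(1)] unfolding diag_class_def by blast
    moreover have "m = mat_image A (mat_image (matrix_inv A) m)"
      by (simp add: mat_image_matrix_inv sym_mats_invertible[OF assms(1)])
    ultimately show "m \<in> mat_image A ` diag_class l" by blast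
  qed
qed

definition class_norm :: "'n matC \<Rightarrow> 'n vecC set \<Rightarrow> complex" where
  "class_norm A l = (\<Prod>l'\<in>diag_class l. perm_coeff A l')"

lemma class_norm_mult:
  assumes "A \<in> sym_mats" "B \<in> sym_mats" "l \<in> L"
  shows "class_norm (A ** B) l = class_norm A (mat_image B l) * class_norm B l"
proof -
  have "class_norm (A ** B) l = (\<Prod>l'\<in>diag_class l. perm_coeff A (mat_image B l') * perm_coeff B l')"
    unfolding class_norm_def
    using perm_coeff_mult[OF assms(1,2)] diag_class_subset by (intro prod.cong) auto
  also have "\<dots> = (\<Prod>l'\<in>diag_class l. perm_coeff A (mat_image B l')) * class_norm B l"
    unfolding class_norm_def by (rule prod.distrib)
  also have "(\<Prod>l'\<in>diag_class l. perm_coeff A (mat_image B l')) = class_norm A (mat_image B l)"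
    unfolding class_norm_def diag_class_mat_image[OF assms(2,3)]
    by (simp add: prod.reindex[OF inj_mat_image[OF sym_mats_invertible[OF assms(2)]]])
  finally show ?thesis .
qed

lemma class_norm_nonzero: "A \<in> sym_mats \<Longrightarrow> class_norm A l \<noteq> 0"
  unfolding class_norm_def using finite_diag_class perm_coeff_nonzero diag_class_subset
  by (auto simp: subset_iff)

lemma class_norm_diag:
  assumes "d \<in> diag_mats" "invertible d" "l \<in> L"
  shows "class_norm d l = eigval d l ^ card (diag_class l)"
proof -
  have "class_norm d l = (\<Prod>l'\<in>diag_class l. eigval d l)"
    unfolding class_norm_def
  proof (rule prod.cong)
    fix l' assume "l' \<in> diag_class l"
    then show "perm_coeff d l' = eigval d l"
      using perm_coeff_diag[OF assms(1,2)] assms(1) unfolding diag_class_def diag_equiv_def by auto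
  qed simp
  then show ?thesis by simp
qed

text \<open>Squares rather than the class products themselves, so that the class reflections qualify.\<close>
definition normalized_mats :: "'n matC set" where
  "normalized_mats = {A \<in> sym_mats. \<forall>l\<in>L. class_norm A l ^ 2 = 1}"

lemma normalized_sym_mat: "A \<in> normalized_mats \<Longrightarrow> A \<in> sym_mats"
  unfolding normalized_mats_def by blast

lemma normalized_invertible: "A \<in> normalized_mats \<Longrightarrow> invertible A"
  by (rule sym_mats_invertible[OF normalized_sym_mat])

lemma class_norm_mat_one: "class_norm (mat 1) l = 1"
proof -
  have "perm_coeff (mat 1) l' = 1" if "l' \<in> L" for l'
    using that by (intro perm_coeff_eqI sym_mats_mat_one) simp_all
  then show ?thesis
    unfolding class_norm_def using diag_class_subset by (intro prod.neutral) auto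
qed

lemma normalized_mat_one: "mat 1 \<in> normalized_mats"
  unfolding normalized_mats_def by (simp add: sym_mats_mat_one class_norm_mat_one)

lemma normalized_mult:
  assumes "A \<in> normalized_mats" "B \<in> normalized_mats"
  shows "A ** B \<in> normalized_mats"
  using assms sym_mats_mult class_norm_mult mat_image_sym_mat_mem
  unfolding normalized_mats_def by (simp add: power_mult_distrib)

lemma normalized_matrix_inv:
  assumes "A \<in> normalized_mats"
  shows "matrix_inv A \<in> normalized_mats"
proof -
  have A: "A \<in> sym_mats" "\<forall>l\<in>L. class_norm A l ^ 2 = 1"
    using assms unfolding normalized_mats_def by auto
  have "class_norm (matrix_inv A) m ^ 2 = 1" if m: "m \<in> L" for m
  proof -
    define l where "l = mat_image (matrix_inv A) m"
    have l: "l \<in> L" "m = mat_image A l"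
      unfolding l_def using mat_image_sym_mat_mem[OF sym_mats_matrix_inv[OF A(1)] m]
      by (simp_all add: mat_image_matrix_inv sym_mats_invertible[OF A(1)])
    have "1 = class_norm (matrix_inv A ** A) l"
      by (simp add: matrix_inv_left sym_mats_invertible[OF A(1)] class_norm_mat_one)
    also have "\<dots> = class_norm (matrix_inv A) m * class_norm A l"
      using class_norm_mult[OF sym_mats_matrix_inv[OF A(1)] A(1) l(1)] l(2) by simp
    finally have "1 = class_norm (matrix_inv A) m ^ 2 * class_norm A l ^ 2"
      by (metis power_mult_distrib power_one)
    then show ?thesis using A(2) l(1) by simp
  qed
  then show ?thesis using sym_mats_matrix_inv[OF A(1)] unfolding normalized_mats_def by blast
qed

lemma class_refl_normalized:
  assumes "l0 \<in> L"
  shows "class_refl l0 \<in> normalized_mats"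
proof -
  have inv: "invertible (class_refl l0)"
    by (rule invertible_diag_mat[OF class_refl_diag[OF assms]]) (simp add: eigval_class_refl[OF assms])
  have "class_norm (class_refl l0) l ^ 2 = 1" if "l \<in> L" for l
    using that by (simp add: class_norm_diag[OF class_refl_diag[OF assms] inv] eigval_class_refl[OF assms]
        flip: power_mult power_mult_distrib)
  then show ?thesis
    using diag_sym_mat[OF class_refl_diag[OF assms] inv] unfolding normalized_mats_def by blast
qed

lemma class_refl_fixes_lines: "l0 \<in> L \<Longrightarrow> l \<in> L \<Longrightarrow> mat_image (class_refl l0) l = l"
  by (intro mat_image_diag_line class_refl_diag normalized_invertible class_refl_normalized)

lemma exists_diag_mat_class_norm:
  assumes nonzero: "\<And>l. l \<in> L \<Longrightarrow> f l \<noteq> 0"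
    and invariant: "\<And>l l'. l \<in> L \<Longrightarrow> l' \<in> L \<Longrightarrow> diag_equiv l l' \<Longrightarrow> f l = f l'"
  obtains d where "d \<in> diag_mats" "invertible d" "\<And>l. l \<in> L \<Longrightarrow> class_norm d l = f l"
proof -
  define root where "root l = (SOME z. z ^ card (diag_class l) = f l)" for l
  have root: "root l ^ card (diag_class l) = f l" if "l \<in> L" for l
    unfolding root_def
    by (rule someI_ex) (use exists_nth_root nonzero[OF that] card_diag_class_pos[OF that] in blast)
  have root_nonzero: "root l \<noteq> 0" if "l \<in> L" for l
    using root[OF that] nonzero[OF that] card_diag_class_pos[OF that] by (auto simp: power_0_left)
  have "root l = root l'" if "l \<in> L" "l' \<in> L" "diag_equiv l l'" for l l'
    unfolding root_def using invariant[OF that] diag_class_eq[OF that(3)] by simp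
  then obtain d where d: "d \<in> diag_mats" "\<And>l. l \<in> L \<Longrightarrow> eigval d l = root l"
    using exists_diag_mat[of root] by blast
  have "invertible d" using invertible_diag_mat d root_nonzero by simp
  with d show thesis using that class_norm_diag root by simp
qed

lemma normalize_sym_mat:
  assumes A: "A \<in> sym_mats"
  obtains d where "d \<in> diag_mats" "invertible d" "d ** A \<in> normalized_mats"
proof -
  have invA: "invertible A" by (rule sym_mats_invertible[OF A])
  define f where "f m = inverse (class_norm A (mat_image (matrix_inv A) m))" for m
  have "f m \<noteq> 0" for m unfolding f_def using class_norm_nonzero[OF A] by simp
  moreover have "f l = f l'" if "l \<in> L" "l' \<in> L" "diag_equiv l l'" for l l'
    using diag_class_eq[OF diag_equiv_mat_image[OF sym_mats_matrix_inv[OF A] that]]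
    unfolding f_def class_norm_def by simp
  ultimately obtain d where d: "d \<in> diag_mats" "invertible d"
    "\<And>m. m \<in> L \<Longrightarrow> class_norm d m = f m"
    using exists_diag_mat_class_norm by blast
  have "class_norm (d ** A) l = 1" if "l \<in> L" for l
    using class_norm_mult[OF diag_sym_mat[OF d(1,2)] A that] d(3)[OF mat_image_sym_mat_mem[OF A that]]
      class_norm_nonzero[OF A]
    by (simp add: f_def mat_image_matrix_inv invA)
  then show thesis
    using that d(1,2) sym_mats_mult[OF diag_sym_mat[OF d(1,2)] A]
    unfolding normalized_mats_def by simp
qed

lemma finite_normalized_diag: "finite (normalized_mats \<inter> diag_mats)"
proof -
  define R where "R = (\<Union>k\<in>{1..card L}. {z::complex. z ^ (2 * k) = 1})"
  have "finite R" unfolding R_def by (intro finite_UN_I) (auto intro: finite_roots_unity)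
  then have fin: "finite (PiE L (\<lambda>_. R))" using finite_lines by (simp add: finite_PiE)
  have "inj_on (\<lambda>E. restrict (eigval E) L) (normalized_mats \<inter> diag_mats)"
  proof (rule inj_onI)
    fix E E' assume E: "E \<in> normalized_mats \<inter> diag_mats" "E' \<in> normalized_mats \<inter> diag_mats"
      and eq: "restrict (eigval E) L = restrict (eigval E') L"
    have "eigval E l = eigval E' l" if "l \<in> L" for l
      using fun_cong[OF eq, of l] that by simp
    then show "E = E'" using E diag_mats_eqI by blast
  qed
  moreover have "(\<lambda>E. restrict (eigval E) L) ` (normalized_mats \<inter> diag_mats) \<subseteq> PiE L (\<lambda>_. R)"
  proof (rule image_subsetI)
    fix E assume "E \<in> normalized_mats \<inter> diag_mats"
    then have E: "E \<in> normalized_mats" "E \<in> diag_mats" by auto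
    have "eigval E l \<in> R" if l: "l \<in> L" for l
    proof -
      have "class_norm E l ^ 2 = 1" using E(1) l unfolding normalized_mats_def by blast
      then have "eigval E l ^ (2 * card (diag_class l)) = 1"
        using class_norm_diag[OF E(2) normalized_invertible[OF E(1)] l] by (metis power_mult mult.commute)
      then show "eigval E l \<in> R"
        unfolding R_def using card_diag_class_pos[OF l] card_diag_class_le[of l]
        by (intro UN_I[of "card (diag_class l)"]) auto
    qed
    then show "restrict (eigval E) L \<in> PiE L (\<lambda>_. R)" by (simp add: restrict_PiE_iff)
  qed
  ultimately show ?thesis using finite_subset[OF _ fin] finite_image_iff by blast
qed

lemma normalized_same_perm_diag:
  assumes "A \<in> normalized_mats" "B \<in> normalized_mats" "\<forall>l\<in>L. mat_image A l = mat_image B l"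
  shows "matrix_inv B ** A \<in> normalized_mats \<inter> diag_mats"
proof
  show "matrix_inv B ** A \<in> normalized_mats"
    by (intro normalized_mult normalized_matrix_inv assms(1,2))
  show "matrix_inv B ** A \<in> diag_mats"
    unfolding diag_mats_def
  proof (intro CollectI ballI)
    fix l assume l: "l \<in> L"
    have "mat_image (matrix_inv B ** A) l = l"
      using assms(3) l by (simp add: mat_image_mult mat_image_matrix_inv normalized_invertible[OF assms(2)])
    then show "(matrix_inv B ** A) *v line_vec l \<in> l"
      unfolding mat_image_def using line_vec_mem[OF is_line_L[OF l]] by blast
  qed
qed

text \<open>A normalized matrix is determined, up to a normalized diagonal factor, by the permutation it
  induces on \<open>L\<close>.\<close>
lemma finite_normalized: "finite normalized_mats"
proof -
  define perm where "perm A = restrict (mat_image A) L" for A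
  define rep where "rep \<sigma> = (SOME B. B \<in> normalized_mats \<and> perm B = \<sigma>)" for \<sigma>
  have "perm ` normalized_mats \<subseteq> PiE L (\<lambda>_. L)"
    unfolding perm_def using mat_image_sym_mat_mem normalized_sym_mat by auto
  moreover have "finite (PiE L (\<lambda>_. L))" using finite_lines by (simp add: finite_PiE)
  ultimately have fin_perm: "finite (perm ` normalized_mats)" by (rule finite_subset)
  have "normalized_mats \<subseteq> (\<lambda>(B, E). B ** E) ` (rep ` perm ` normalized_mats \<times> (normalized_mats \<inter> diag_mats))"
  proof
    fix A assume A: "A \<in> normalized_mats"
    define B where "B = rep (perm A)"
    have "B \<in> normalized_mats \<and> perm B = perm A"
      unfolding B_def rep_def by (rule someI_ex) (use A in blast)
    then have B: "B \<in> normalized_mats" "perm B = perm A" by auto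
    have invB: "invertible B" by (rule normalized_invertible[OF B(1)])
    define E where "E = matrix_inv B ** A"
    have "E \<in> normalized_mats \<inter> diag_mats"
      unfolding E_def using B(2) by (intro normalized_same_perm_diag A B(1)) (metis perm_def restrict_apply')
    moreover have "A = B ** E" unfolding E_def by (simp add: matrix_mul_assoc matrix_inv_right invB)
    moreover have "B \<in> rep ` perm ` normalized_mats" unfolding B_def using A by blast
    ultimately show "A \<in> (\<lambda>(B, E). B ** E) ` (rep ` perm ` normalized_mats \<times> (normalized_mats \<inter> diag_mats))"
      by (intro image_eqI[of _ _ "(B, E)"]) simp_all
  qed
  moreover have "finite (rep ` perm ` normalized_mats \<times> (normalized_mats \<inter> diag_mats))"
    using fin_perm finite_normalized_diag by simp
  ultimately show ?thesis using finite_subset by blast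
qed

text \<open>Write a symmetry as \<open>d\<inverse> (d M)\<close> with \<open>d M\<close> normalized and \<open>d\<close> diagonal; diagonal matrices
  are combinations of class reflections, which are normalized and fix all lines of \<open>L\<close>.\<close>
lemma sym_mat_invariant_if_normalized:
  assumes S: "vec.subspace S" and K: "K \<subseteq> L"
    and normalized_inv: "\<And>A. A \<in> normalized_mats \<Longrightarrow> \<forall>l\<in>K. mat_image A l = l \<Longrightarrow> mat_invariant A S"
    and M: "M \<in> sym_mats" "\<forall>l\<in>K. mat_image M l = l"
  shows "mat_image M S = S"
proof -
  have diag_inv: "mat_invariant d S" if "d \<in> diag_mats" for d
    using diag_mats_invariant[OF S _ that] normalized_inv class_refl_normalized class_refl_fixes_lines K
    by blast
  have sym_inv: "mat_invariant N S" if N: "N \<in> sym_mats" "\<forall>l\<in>K. mat_image N l = l" for N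
  proof -
    obtain d where d: "d \<in> diag_mats" "invertible d" "d ** N \<in> normalized_mats"
      using normalize_sym_mat[OF N(1)] by blast
    have "\<forall>l\<in>K. mat_image (d ** N) l = l"
      using N(2) K mat_image_diag_line[OF d(1,2)] by (auto simp: mat_image_mult)
    then have "mat_invariant (d ** N) S" by (rule normalized_inv[OF d(3)])
    moreover have "mat_invariant (matrix_inv d) S" by (rule diag_inv[OF diag_mats_matrix_inv[OF d(1,2)]])
    moreover have "N = matrix_inv d ** (d ** N)" by (simp add: matrix_mul_assoc matrix_inv_left d(2))
    ultimately show ?thesis using mat_invariant_mult by metis
  qed
  have "\<forall>l\<in>K. mat_image (matrix_inv M) l = l"
    using M(2) mat_image_matrix_inv(1)[OF sym_mats_invertible[OF M(1)]] by metis
  then have "mat_invariant (matrix_inv M) S" by (rule sym_inv[OF sym_mats_matrix_inv[OF M(1)]])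
  moreover have "mat_invariant M S" by (rule sym_inv[OF M])
  ultimately show ?thesis
    using mat_image_eqI sym_mats_invertible[OF M(1)] unfolding mat_invariant_def by blast
qed

section \<open>The finite symmetry group\<close>

definition normalized_group :: "'n matC set set" where
  "normalized_group = pgl_class ` normalized_mats"

lemma subgroup_normalized_group: "subgroup normalized_group PGL_group"
  unfolding normalized_group_def
  by (rule subgroup_pgl_class_image)
    (simp_all add: normalized_invertible normalized_mat_one normalized_mult normalized_matrix_inv)

lemma finite_normalized_group: "finite normalized_group"
  unfolding normalized_group_def using finite_normalized by simp

lemma normalized_group_subset_Sym: "normalized_group \<subseteq> Sym L"
  unfolding normalized_group_def Sym_eq_pgl_class_image using normalized_sym_mat by blast

lemma proj_irreducible_normalized_group:
  assumes "proj_irreducible (Sym L)"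
  shows "proj_irreducible normalized_group"
  unfolding proj_irreducible_def
proof
  assume "\<exists>W. vec.subspace W \<and> W \<noteq> {0} \<and> W \<noteq> UNIV \<and> (\<forall>g\<in>normalized_group. pgl_apply g W = W)"
  then obtain W where W: "vec.subspace W" "W \<noteq> {0}" "W \<noteq> UNIV"
    and invariant: "\<forall>g\<in>normalized_group. pgl_apply g W = W"
    by blast
  have "pgl_apply g W = W" if g: "g \<in> Sym L" for g
  proof -
    obtain M where M: "M \<in> sym_mats" "g = pgl_class M"
      using g unfolding Sym_eq_pgl_class_image by blast
    have "mat_image M W = W"
    proof (rule sym_mat_invariant_if_normalized[OF W(1), of "{}"])
      fix A assume "A \<in> normalized_mats"
      then show "mat_invariant A W"
        using invariant pgl_apply_class[OF W(1)] unfolding normalized_group_def mat_invariant_def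
        by auto
    qed (use M in auto)
    then show ?thesis unfolding M(2) pgl_apply_class[OF W(1)] .
  qed
  then show False using assms W unfolding proj_irreducible_def by blast
qed

lemma transitive_on_normalized_group:
  assumes "transitive_on (Sym L) L"
  shows "transitive_on normalized_group L"
  unfolding transitive_on_def
proof (intro ballI)
  fix l m assume l: "l \<in> L" and m: "m \<in> L"
  obtain g where "g \<in> Sym L" "pgl_apply g l = m"
    using assms l m unfolding transitive_on_def by blast
  then obtain M where M: "M \<in> sym_mats" "mat_image M l = m"
    unfolding Sym_eq_pgl_class_image using pgl_apply_class[OF subspace_line[OF is_line_L[OF l]]]
    by auto
  obtain d where d: "d \<in> diag_mats" "invertible d" "d ** M \<in> normalized_mats"
    using normalize_sym_mat[OF M(1)] by blast
  have "pgl_apply (pgl_class (d ** M)) l = m"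
    using pgl_apply_class[OF subspace_line[OF is_line_L[OF l]]] M(2) mat_image_diag_line[OF d(1,2) m]
    by (simp add: mat_image_mult)
  moreover have "pgl_class (d ** M) \<in> normalized_group"
    unfolding normalized_group_def using d(3) by blast
  ultimately show "\<exists>g\<in>normalized_group. pgl_apply g l = m" by blast
qed

lemma normalized_group_stab_no_fixed_subspace:
  assumes l: "l \<in> L"
    and isolated: "\<exists>N. openin proj_top N \<and> l \<in> N \<and>
      (\<forall>m\<in>N. is_line m \<and> m \<noteq> l \<longrightarrow> \<not> (\<forall>h\<in>stab (Sym L) l. pgl_apply h m = m))"
  shows "\<not> (\<exists>W. vec.subspace W \<and> l \<subset> W \<and>
            (\<forall>g\<in>stab normalized_group l. \<forall>m. is_line m \<and> m \<subseteq> W \<longrightarrow> pgl_apply g m = m))"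
proof
  assume "\<exists>W. vec.subspace W \<and> l \<subset> W \<and>
            (\<forall>g\<in>stab normalized_group l. \<forall>m. is_line m \<and> m \<subseteq> W \<longrightarrow> pgl_apply g m = m)"
  then obtain W where W: "vec.subspace W" "l \<subset> W"
    and fixed: "\<forall>g\<in>stab normalized_group l. \<forall>m. is_line m \<and> m \<subseteq> W \<longrightarrow> pgl_apply g m = m"
    by blast
  obtain N where N: "openin proj_top N" "l \<in> N"
    and no_fixed: "\<forall>m\<in>N. is_line m \<and> m \<noteq> l \<longrightarrow> \<not> (\<forall>h\<in>stab (Sym L) l. pgl_apply h m = m)"
    using isolated by blast
  obtain m where m: "m \<in> N" "is_line m" "m \<noteq> l" "m \<subseteq> W"
    using proj_open_nbhd_meets_subspace[OF N is_line_L[OF l] W] by blast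
  have pgl_apply_line: "pgl_apply (pgl_class M) k = mat_image M k" if "is_line k" for M k
    by (rule pgl_apply_class[OF subspace_line[OF that]])
  have "pgl_apply h m = m" if h: "h \<in> stab (Sym L) l" for h
  proof -
    obtain M where M: "M \<in> sym_mats" "h = pgl_class M"
      using h unfolding stab_def Sym_eq_pgl_class_image by blast
    with h have M_l: "mat_image M l = l"
      using pgl_apply_line[OF is_line_L[OF l]] unfolding stab_def by simp
    have "mat_image M m = m"
    proof (rule sym_mat_invariant_if_normalized[OF subspace_line[OF m(2)], of "{l}"])
      fix A assume A: "A \<in> normalized_mats" "\<forall>l'\<in>{l}. mat_image A l' = l'"
      then have "pgl_class A \<in> stab normalized_group l"
        using is_line_L[OF l] pgl_apply_line unfolding stab_def normalized_group_def by auto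
      then have "pgl_apply (pgl_class A) m = m" using fixed m(2,4) by blast
      then show "mat_invariant A m"
        unfolding mat_invariant_def pgl_apply_line[OF m(2)] by simp
    qed (use M M_l l in auto)
    then show ?thesis using M(2) pgl_apply_line[OF m(2)] by simp
  qed
  then show False using no_fixed m by blast
qed

end

theorem mainTheorem1:
  fixes L :: "('n::finite) vecC set set"
  assumes "highly_symmetric L"
  shows "\<exists>G. subgroup G PGL_group \<and> finite G \<and> G \<subseteq> Sym L
           \<and> proj_irreducible G
           \<and> transitive_on G L
           \<and> (\<forall>l\<in>L. \<not> (\<exists>W. vec.subspace W \<and> l \<subset> W \<and>
                 (\<forall>g\<in>stab G l. \<forall>m. is_line m \<and> m \<subseteq> W \<longrightarrow> pgl_apply g m = m)))"
proof -
  have "line_system L" and irreducible: "proj_irreducible (Sym L)"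
    and transitive: "transitive_on (Sym L) L"
    and isolated: "\<forall>l\<in>L. \<exists>N. openin proj_top N \<and> l \<in> N \<and>
      (\<forall>m\<in>N. is_line m \<and> m \<noteq> l \<longrightarrow> \<not> (\<forall>h\<in>stab (Sym L) l. pgl_apply h m = m))"
    using assms unfolding highly_symmetric_def by auto
  then interpret spanning_lines L by unfold_locales
  show ?thesis
  proof (intro exI[of _ normalized_group] conjI ballI)
    fix l assume "l \<in> L"
    with isolated show "\<not> (\<exists>W. vec.subspace W \<and> l \<subset> W \<and>
        (\<forall>g\<in>stab normalized_group l. \<forall>m. is_line m \<and> m \<subseteq> W \<longrightarrow> pgl_apply g m = m))"
      by (intro normalized_group_stab_no_fixed_subspace) auto
  qed (simp_all add: subgroup_normalized_group finite_normalized_group normalized_group_subset_Sym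
      proj_irreducible_normalized_group[OF irreducible] transitive_on_normalized_group[OF transitive])
qed

end
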